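(* Let $G=(N,T,F,P,S)$ be a grounded indexed grammar, let $D$ be a derivation tree of $G$ for a string $s$ with some set of marked positions, and let $H=(v_0,\dots,v_m)$ be a path in $D$ from the root to a leaf (excluding the leaf) containing more than $(|N|\cdot 3^{|N|})^{|N|^2\cdot 3^{|N|}+1}$ branch nodes. Then there are indices $0\le b_1<t_1<t_2\le b_2\le m$ such that: $\sigma(v_{b_1})=\sigma(v_{t_1})$ and $\sigma(v_{t_2})=\sigma(v_{b_2})$; $v_{b_2}\in\beta(v_{b_1})$ and $v_{t_2}\in\beta(v_{t_1})$; $\tau(v_{b_1})=\tau(v_{t_1})$; and there is a branch node among $v_{b_1},\dots,v_{t_1-1}$ or among $v_{t_2},\dots,v_{b_2-1}$.
   Context: An indexed grammar $G=(N,T,F,P,S)$ has finite alphabets $N$ (nonterminals), $T$ (terminals), $F$ (stack symbols), start symbol $S\in N$, and productions of the forms $A\to r$, $A\to Bf$, $Af\to r$ ($A,B\in N$, $f\in F$, $r\in(N\cup T)^*$); a nonterminal carries a stack $x\in F^*$ (written $Ax$, first symbol of $x$ on top), and for $r\in(N\cup T)^*$, $r\{x\}$ is $r$ with each nonterminal $A$ replaced by $Ax$. Applying $A\to r$ to $Ax$ gives $r\{x\}$; applying $A\to Bf$ to $Ax$ gives $Bfx$; applying $Af\to r$ to $Afy$ gives $r\{y\}$. $G$ is grounded if there is $\$\in F$ such that every production has one of the forms $S\to A\$$, $A\to r$, $A\to Bf$, $Af\to r$, $A\$\to s$ with $A,B\in N\setminus\{S\}$, $f\in F\setminus\{\$\}$,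 $r\in(N\setminus\{S\})^+$, $s\in T^*$. A derivation tree $D$ for $s\in T^*$ is an ordered rooted tree whose internal nodes are labelled in $NF^*$ and whose leaves are labelled in $T^*$; the root is labelled $S$ (empty stack); each internal node labelled $Ax$ has as children, in order, the result of applying one production of $G$ to $Ax$ (internal children labelled by the nonterminals-with-stacks produced, or, for a production $A\$\to s'$ with $x=\$$, a single leaf labelled $s'$); the concatenation of leaf labels from left to right is $s$. Given a set of marked positions of $s$: a leaf is marked if its label contains a marked position of $s$; an internal node is marked if it has a marked descendant; a branch node is a node with more than one marked child. A path is a list of nodes $(v_0,\dots,v_m)$, $m\ge 0$, with $v_i$ a child of $v_{i-1}$. For an internal node $v$ labelled $Ax$: $\sigma(v)=A$ and $\eta(v)=|x|$. A node $v'$ is in the scope of $v$ iff $v'$ is internal and there is a path from $v$ to $v'$ all of whose nodes $v''$ (including $v'$) satisfy $\eta(v'')\ge\eta(v)$. $\beta(v)$ is the set of nodes $v'$ in the scope of $v$ such that no child of $v'$ is in the scope of $v$. $\tau(v)$ is the triple $(\tau_1,\tau_2,\tau_3)$ where $\tau_1=\{A\in N:\sigma(v')\neq A$ for all $v'\in\beta(v)\}$, $\tau_2=\{A\in N:\sigma(v')=A$ for some $v'\in\beta(v)$ and $\sigma(v')\ne A$ for all marked $v'\in\beta(v)\}$, $\tau_3=\{A\in N:\sigma(v')=A$ for some marked $v'\in\beta(v)\}$. *)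

theory Defs
  imports Main
begin

text \<open>PRule A r   is  A -> r        (r in (N u T)^*)
  PPush A B f is  A -> B f
  PPop A f r  is  A f -> r      (r in (N u T)^*)\<close>
datatype ('n, 't, 'f) production =
    PRule 'n "('n + 't) list"
  | PPush 'n 'n 'f
  | PPop 'n 'f "('n + 't) list"

record ('n, 't, 'f) igrammar =
  nts   :: "'n set"
  terms :: "'t set"
  stks  :: "'f set"
  prods :: "('n, 't, 'f) production set"
  start :: 'n

definition rhs_ok :: "('n, 't, 'f) igrammar \<Rightarrow> ('n + 't) list \<Rightarrow> bool" where
  "rhs_ok G r \<longleftrightarrow> (\<forall>z\<in>set r. case z of Inl A \<Rightarrow> A \<in> nts G | Inr a \<Rightarrow> a \<in> terms G)"

fun prod_ok :: "('n, 't, 'f) igrammar \<Rightarrow> ('n, 't, 'f) production \<Rightarrow> bool" where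
  "prod_ok G (PRule A r) \<longleftrightarrow> A \<in> nts G \<and> rhs_ok G r"
| "prod_ok G (PPush A B f) \<longleftrightarrow> A \<in> nts G \<and> B \<in> nts G \<and> f \<in> stks G"
| "prod_ok G (PPop A f r) \<longleftrightarrow> A \<in> nts G \<and> f \<in> stks G \<and> rhs_ok G r"

definition igrammar :: "('n, 't, 'f) igrammar \<Rightarrow> bool" where
  "igrammar G \<longleftrightarrow> finite (nts G) \<and> finite (terms G) \<and> finite (stks G) \<and> finite (prods G)
     \<and> start G \<in> nts G \<and> (\<forall>p\<in>prods G. prod_ok G p)"

text \<open>Grounded with bottom symbol d (the paper's dollar).\<close>
definition grounded_with :: "('n, 't, 'f) igrammar \<Rightarrow> 'f \<Rightarrow> bool" where
  "grounded_with G d \<longleftrightarrow> d \<in> stks G \<and> (\<forall>p\<in>prods G.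
      (\<exists>A. A \<in> nts G - {start G} \<and> p = PPush (start G) A d)
    \<or> (\<exists>A bs. A \<in> nts G - {start G} \<and> bs \<noteq> [] \<and> set bs \<subseteq> nts G - {start G} \<and> p = PRule A (map Inl bs))
    \<or> (\<exists>A B f. A \<in> nts G - {start G} \<and> B \<in> nts G - {start G} \<and> f \<in> stks G - {d} \<and> p = PPush A B f)
    \<or> (\<exists>A f bs. A \<in> nts G - {start G} \<and> f \<in> stks G - {d} \<and> bs \<noteq> [] \<and> set bs \<subseteq> nts G - {start G}
         \<and> p = PPop A f (map Inl bs))
    \<or> (\<exists>A w. A \<in> nts G - {start G} \<and> set w \<subseteq> terms G \<and> p = PPop A d (map Inr w)))"

definition grounded :: "('n, 't, 'f) igrammar \<Rightarrow> bool" where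
  "grounded G \<longleftrightarrow> (\<exists>d. grounded_with G d)"

text \<open>Internal nodes are labelled A x (nonterminal with stack, head of list = top); leaves by strings.\<close>
datatype ('n, 't, 'f) dtree = Node 'n "'f list" "('n, 't, 'f) dtree list" | Leaf "'t list"

fun lab :: "('n, 't, 'f) dtree \<Rightarrow> ('n \<times> 'f list) + 't list" where
  "lab (Node A x cs) = Inl (A, x)"
| "lab (Leaf w) = Inr w"

text \<open>The children cs of a node labelled A x are the result of applying production p.
  Applying A f -> s with s in T^* to A [f] yields a single leaf labelled s
  (in grounded grammars this is exactly the A dollar -> s case).\<close>
fun applies :: "('n, 't, 'f) production \<Rightarrow> 'n \<Rightarrow> 'f list \<Rightarrow> ('n, 't, 'f) dtree list \<Rightarrow> bool" where
  "applies (PRule B r) A x cs \<longleftrightarrow> B = A \<and>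
      (\<exists>bs. r = map Inl bs \<and> map lab cs = map (\<lambda>C. Inl (C, x)) bs)"
| "applies (PPush B C f) A x cs \<longleftrightarrow> B = A \<and> map lab cs = [Inl (C, f # x)]"
| "applies (PPop B f r) A x cs \<longleftrightarrow> B = A \<and>
      ((\<exists>y bs. x = f # y \<and> bs \<noteq> [] \<and> r = map Inl bs \<and> map lab cs = map (\<lambda>C. Inl (C, y)) bs)
     \<or> (\<exists>w. x = [f] \<and> r = map Inr w \<and> map lab cs = [Inr w]))"

fun valid_tree :: "('n, 't, 'f) igrammar \<Rightarrow> ('n, 't, 'f) dtree \<Rightarrow> bool" where
  "valid_tree G (Node A x cs) \<longleftrightarrow> (\<exists>p\<in>prods G. applies p A x cs) \<and> (\<forall>c\<in>set cs. valid_tree G c)"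
| "valid_tree G (Leaf w) \<longleftrightarrow> True"

fun yield :: "('n, 't, 'f) dtree \<Rightarrow> 't list" where
  "yield (Leaf w) = w"
| "yield (Node A x cs) = concat (map yield cs)"

definition deriv_tree :: "('n, 't, 'f) igrammar \<Rightarrow> ('n, 't, 'f) dtree \<Rightarrow> 't list \<Rightarrow> bool" where
  "deriv_tree G D s \<longleftrightarrow> (\<exists>cs. D = Node (start G) [] cs) \<and> valid_tree G D \<and> yield D = s"

fun sub :: "('n, 't, 'f) dtree \<Rightarrow> nat list \<Rightarrow> ('n, 't, 'f) dtree option" where
  "sub t [] = Some t"
| "sub (Node A x cs) (i # p) = (if i < length cs then sub (cs ! i) p else None)"
| "sub (Leaf w) (i # p) = None"

text \<open>Position in s of the first symbol of the yield of the node at an address.\<close>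
fun offset :: "('n, 't, 'f) dtree \<Rightarrow> nat list \<Rightarrow> nat" where
  "offset t [] = 0"
| "offset (Node A x cs) (i # p) = sum_list (map (length \<circ> yield) (take i cs)) + offset (cs ! i) p"
| "offset (Leaf w) (i # p) = 0"

definition is_internal :: "('n, 't, 'f) dtree \<Rightarrow> nat list \<Rightarrow> bool" where
  "is_internal D v \<longleftrightarrow> (\<exists>A x cs. sub D v = Some (Node A x cs))"

fun nt_of :: "('n, 't, 'f) dtree \<Rightarrow> 'n" where
  "nt_of (Node A x cs) = A"

fun stk_of :: "('n, 't, 'f) dtree \<Rightarrow> 'f list" where
  "stk_of (Node A x cs) = x"

definition sigma :: "('n, 't, 'f) dtree \<Rightarrow> nat list \<Rightarrow> 'n" where
  "sigma D v = nt_of (the (sub D v))"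

definition eta :: "('n, 't, 'f) dtree \<Rightarrow> nat list \<Rightarrow> nat" where
  "eta D v = length (stk_of (the (sub D v)))"

definition leaf_marked :: "('n, 't, 'f) dtree \<Rightarrow> nat set \<Rightarrow> nat list \<Rightarrow> bool" where
  "leaf_marked D M v \<longleftrightarrow> (\<exists>w. sub D v = Some (Leaf w) \<and>
      (\<exists>i\<in>M. offset D v \<le> i \<and> i < offset D v + length w))"

definition marked :: "('n, 't, 'f) dtree \<Rightarrow> nat set \<Rightarrow> nat list \<Rightarrow> bool" where
  "marked D M v \<longleftrightarrow> (\<exists>q. leaf_marked D M (v @ q))"

definition branch :: "('n, 't, 'f) dtree \<Rightarrow> nat set \<Rightarrow> nat list \<Rightarrow> bool" where
  "branch D M v \<longleftrightarrow> card {i. marked D M (v @ [i])} > 1"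

definition scope :: "('n, 't, 'f) dtree \<Rightarrow> nat list \<Rightarrow> nat list set" where
  "scope D v = {v @ q | q. is_internal D (v @ q) \<and>
                 (\<forall>k\<le>length q. eta D (v @ take k q) \<ge> eta D v)}"

definition beta :: "('n, 't, 'f) dtree \<Rightarrow> nat list \<Rightarrow> nat list set" where
  "beta D v = {v' \<in> scope D v. \<forall>i. v' @ [i] \<notin> scope D v}"

definition tau :: "('n, 't, 'f) igrammar \<Rightarrow> ('n, 't, 'f) dtree \<Rightarrow> nat set \<Rightarrow> nat list
                    \<Rightarrow> 'n set \<times> 'n set \<times> 'n set" where
  "tau G D M v =
     ({A \<in> nts G. \<forall>v'\<in>beta D v. sigma D v' \<noteq> A},
      {A \<in> nts G. (\<exists>v'\<in>beta D v. sigma D v' = A) \<and> (\<forall>v'\<in>beta D v. marked D M v' \<longrightarrow> sigma D v' \<noteq> A)},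
      {A \<in> nts G. \<exists>v'\<in>beta D v. marked D M v' \<and> sigma D v' = A})"

end

theory Submission
  imports Defs "HOL-Library.FuncSet"
begin

text \<open>Along the path the stack height changes by at most one per step, since every production
  pushes or pops at most one symbol and siblings share their stack. For a node v_i, the last
  index before the height first drops below that of v_i marks a node of \<beta>(v_i), and the
  resulting intervals of indices are laminar. Repeatedly passing to a subinterval that keeps about
  half of the branch nodes yields a chain of nested intervals, each separated from the next by a
  branch node; the chain is longer than the number of possible colours
  (\<sigma> at both ends of the interval, \<tau> at its start), so two of its intervals share a colour.\<close>

locale height_profile =
  fixes h :: "nat \<Rightarrow> nat" and m :: nat
  assumes ascent_le_one: "k < m \<Longrightarrow> h (Suc k) \<le> Suc (h k)"
begin

definition scope_end :: "nat \<Rightarrow> nat" where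
  "scope_end i = (LEAST j. i \<le> j \<and> (j = m \<or> h (Suc j) < h i))"

lemma scope_end_spec:
  assumes "i \<le> m"
  shows "i \<le> scope_end i \<and> (scope_end i = m \<or> h (Suc (scope_end i)) < h i)"
  unfolding scope_end_def by (rule LeastI[of _ m]) (use assms in auto)

lemma scope_end_le: "i \<le> m \<Longrightarrow> scope_end i \<le> m"
  unfolding scope_end_def by (rule Least_le) simp

lemma scope_end_ge: "i \<le> m \<Longrightarrow> i \<le> scope_end i"
  using scope_end_spec by blast

lemma scope_end_exit: "i \<le> m \<Longrightarrow> scope_end i \<noteq> m \<Longrightarrow> h (Suc (scope_end i)) < h i"
  using scope_end_spec by blast

lemma before_scope_end:
  assumes "i \<le> k" "k < scope_end i"
  shows "k \<noteq> m \<and> h i \<le> h (Suc k)"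
  using not_less_Least[of k "\<lambda>j. i \<le> j \<and> (j = m \<or> h (Suc j) < h i)"] assms
  unfolding scope_end_def by auto

lemma height_ge_in_scope:
  assumes "i \<le> k" "k \<le> scope_end i"
  shows "h i \<le> h k"
proof (cases k)
  case (Suc k')
  with assms show ?thesis
    using before_scope_end[of i k'] by (cases "k = i") auto
qed (use assms in simp)

lemma scope_end_eq_last: "i \<le> m \<Longrightarrow> h i = 0 \<Longrightarrow> scope_end i = m"
  using scope_end_exit by fastforce

lemma scope_end_nested:
  assumes "i \<le> m" "i \<le> j" "j \<le> scope_end i"
  shows "scope_end j \<le> scope_end i"
proof -
  have "h i \<le> h j" using height_ge_in_scope assms(2,3) .
  then have "j \<le> scope_end i \<and> (scope_end i = m \<or> h (Suc (scope_end i)) < h j)"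
    using scope_end_spec[OF assms(1)] assms(3) by auto
  then show ?thesis unfolding scope_end_def[of j] by (rule Least_le)
qed

text \<open>Since h climbs by at most one per step, the first descent below h (Suc i) after
  Suc i lands exactly on h i, so the scope of i resumes there.\<close>
lemma scope_end_resumes:
  assumes "i \<le> m" "i < scope_end i" and inner: "scope_end (Suc i) < scope_end i"
  shows "scope_end (Suc (scope_end (Suc i))) = scope_end i"
proof -
  define q where "q = scope_end (Suc i)"
  have Suc_i: "Suc i \<le> m" using assms scope_end_le[OF assms(1)] by simp
  have q_bounds: "Suc i \<le> q" "q < scope_end i"
    using scope_end_ge[OF Suc_i] inner unfolding q_def by auto
  have "q \<noteq> m" using q_bounds scope_end_le[OF assms(1)] by simp
  then have "h (Suc q) < h (Suc i)" using scope_end_exit[OF Suc_i] unfolding q_def by simp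
  moreover have "h i \<le> h (Suc q)" using before_scope_end[of i q] q_bounds by simp
  moreover have "h (Suc i) \<le> Suc (h i)" using ascent_le_one Suc_i by simp
  ultimately have hq: "h (Suc q) = h i" by simp
  have Suc_q: "Suc q \<le> m" using q_bounds scope_end_le[OF assms(1)] by simp
  have "scope_end (Suc q) \<le> scope_end i"
    unfolding scope_end_def[of "Suc q"]
    by (rule Least_le) (use scope_end_spec[OF assms(1)] hq q_bounds in auto)
  moreover have "\<not> scope_end (Suc q) < scope_end i"
  proof
    assume lt: "scope_end (Suc q) < scope_end i"
    have "i \<le> scope_end (Suc q)" using scope_end_ge[OF Suc_q] q_bounds by simp
    then show False using before_scope_end[OF _ lt] scope_end_spec[OF Suc_q] hq by auto
  qed
  ultimately show ?thesis unfolding q_def by simp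
qed

definition branches_in_scope :: "nat set \<Rightarrow> nat \<Rightarrow> nat" where
  "branches_in_scope B i = card (B \<inter> {i..<scope_end i})"

definition branch_nested :: "nat set \<Rightarrow> nat \<Rightarrow> nat \<Rightarrow> bool" where
  "branch_nested B u w \<longleftrightarrow> u < w \<and> scope_end w \<le> scope_end u \<and>
     (\<exists>i\<in>B. u \<le> i \<and> i < w \<or> scope_end w \<le> i \<and> i < scope_end u)"

lemma card_le_Suc_branches_in_scope:
  assumes "scope_end 0 = m" "B \<subseteq> {..m}"
  shows "card B \<le> Suc (branches_in_scope B 0)"
proof -
  have "card B \<le> card (insert m (B \<inter> {0..<scope_end 0}))"
    using assms by (intro card_mono) auto
  then show ?thesis unfolding branches_in_scope_def by (auto simp: card_insert_if split: if_splits)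
qed

lemma branches_in_scope_pos: "0 < branches_in_scope B i \<Longrightarrow> i < scope_end i"
  unfolding branches_in_scope_def by (rule ccontr) simp

lemma branch_nested_shrink:
  assumes "branch_nested B u w" "w \<le> w'" "scope_end w' \<le> scope_end w"
  shows "branch_nested B u w'"
  using assms unfolding branch_nested_def by (meson le_trans less_le_trans not_le)

lemma branches_in_scope_split:
  assumes "i \<le> m"
  defines "q \<equiv> scope_end (Suc i)"
  shows "branches_in_scope B i
           \<le> 2 + branches_in_scope B (Suc i) + card (B \<inter> {Suc q..<scope_end i})"
proof -
  have "B \<inter> {i..<scope_end i} \<subseteq>
          {i, q} \<union> (B \<inter> {Suc i..<q}) \<union> (B \<inter> {Suc q..<scope_end i})" by auto
  then have "branches_in_scope B i
               \<le> card ({i, q} \<union> (B \<inter> {Suc i..<q}) \<union> (B \<inter> {Suc q..<scope_end i}))"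
    unfolding branches_in_scope_def by (intro card_mono) auto
  also have "\<dots> \<le> card {i, q} + card (B \<inter> {Suc i..<q}) + card (B \<inter> {Suc q..<scope_end i})"
    by (meson add_mono card_Un_le le_trans order_refl)
  also have "card {i, q} \<le> 2" by (simp add: card_insert_le_m1)
  finally show ?thesis unfolding branches_in_scope_def q_def by simp
qed

text \<open>Of the two maximal subintervals of the scope of i right after i (the scope of Suc i and
  what follows it), one carries about half of the branch indices.\<close>
lemma branches_in_inner_scope:
  assumes "i \<le> m" "2 * F + 2 \<le> branches_in_scope B i"
  shows "\<exists>j. i < j \<and> j \<le> m \<and> scope_end j \<le> scope_end i \<and> F \<le> branches_in_scope B j"
proof -
  define q where "q = scope_end (Suc i)"
  have "i < scope_end i" using assms(2) branches_in_scope_pos[of B i] by linarith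
  then have Suc_i: "Suc i \<le> m" "scope_end (Suc i) \<le> scope_end i"
    using scope_end_le[OF assms(1)] scope_end_nested[OF assms(1), of "Suc i"] by auto
  have split: "branches_in_scope B i
                 \<le> 2 + branches_in_scope B (Suc i) + card (B \<inter> {Suc q..<scope_end i})"
    using branches_in_scope_split[OF assms(1)] unfolding q_def .
  show ?thesis
  proof (cases "card (B \<inter> {Suc q..<scope_end i}) \<le> branches_in_scope B (Suc i)")
    case True
    then show ?thesis using split assms(2) Suc_i by (intro exI[of _ "Suc i"]) auto
  next
    case False
    then have "q < scope_end i" by (cases "q < scope_end i") auto
    then have resume: "scope_end (Suc q) = scope_end i"
      using scope_end_resumes[OF assms(1) \<open>i < scope_end i\<close>] unfolding q_def by simp
    then have "F \<le> branches_in_scope B (Suc q)"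
      using split assms(2) False unfolding branches_in_scope_def by simp
    moreover have "Suc i \<le> q" using scope_end_ge[OF Suc_i(1)] unfolding q_def .
    ultimately show ?thesis
      using resume \<open>q < scope_end i\<close> scope_end_le[OF assms(1)] by (intro exI[of _ "Suc q"]) auto
  qed
qed

lemma branch_nested_step:
  assumes "x \<le> m" "2 * F + 2 \<le> branches_in_scope B x"
  shows "\<exists>y z. x \<le> y \<and> y < scope_end y \<and> scope_end y \<le> scope_end x \<and> y \<le> m \<and> z \<le> m \<and>
                branch_nested B y z \<and> F \<le> branches_in_scope B z"
proof -
  define Y where "Y = {y. y \<le> m \<and> x \<le> y \<and> scope_end y \<le> scope_end x \<and>
                          2 * F + 2 \<le> branches_in_scope B y}"
  have "finite Y" "x \<in> Y" unfolding Y_def using assms by auto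
  define y where "y = Max Y"
  have "y \<in> Y" using Max_in[OF \<open>finite Y\<close>] \<open>x \<in> Y\<close> unfolding y_def by blast
  then have y: "y \<le> m" "x \<le> y" "scope_end y \<le> scope_end x" "2 * F + 2 \<le> branches_in_scope B y"
    unfolding Y_def by auto
  obtain z where z: "y < z" "z \<le> m" "scope_end z \<le> scope_end y" "F \<le> branches_in_scope B z"
    using branches_in_inner_scope[OF y(1,4)] by blast
  have "z \<notin> Y" using Max_ge[OF \<open>finite Y\<close>] z(1) unfolding y_def by fastforce
  then have "branches_in_scope B z < branches_in_scope B y" using y z unfolding Y_def by auto
  then have "\<not> B \<inter> {y..<scope_end y} \<subseteq> B \<inter> {z..<scope_end z}"
    unfolding branches_in_scope_def by (meson card_mono finite_Int finite_atLeastLessThan leD)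
  then have "\<exists>i\<in>B. y \<le> i \<and> i < z \<or> scope_end z \<le> i \<and> i < scope_end y" by auto
  moreover have "y < scope_end y" using y(4) branches_in_scope_pos[of B y] by linarith
  ultimately show ?thesis using y z unfolding branch_nested_def by blast
qed

lemma branch_nested_chain:
  "x \<le> m \<Longrightarrow> 4 ^ L \<le> branches_in_scope B x \<Longrightarrow>
     \<exists>ws. length ws = L \<and> sorted_wrt (branch_nested B) ws \<and>
          (\<forall>w\<in>set ws. x \<le> w \<and> w < scope_end w \<and> w \<le> m \<and> scope_end w \<le> scope_end x)"
proof (induction L arbitrary: x)
  case (Suc L)
  have "2 * 4 ^ L + 2 \<le> (4::nat) ^ Suc L" using one_le_power[of "4::nat" L] by simp
  then obtain y z where yz: "x \<le> y" "y < scope_end y" "scope_end y \<le> scope_end x" "y \<le> m" "z \<le> m"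
      "branch_nested B y z" "4 ^ L \<le> branches_in_scope B z"
    using branch_nested_step[OF Suc.prems(1)] Suc.prems(2) by (meson le_trans)
  obtain ws where ws: "length ws = L" "sorted_wrt (branch_nested B) ws"
      "\<forall>w\<in>set ws. z \<le> w \<and> w < scope_end w \<and> w \<le> m \<and> scope_end w \<le> scope_end z"
    using Suc.IH[OF yz(5,7)] by blast
  have "\<forall>w\<in>set ws. branch_nested B y w"
    using ws(3) yz(6) branch_nested_shrink by blast
  moreover have "\<forall>w\<in>set (y # ws). x \<le> w \<and> w < scope_end w \<and> w \<le> m \<and> scope_end w \<le> scope_end x"
    using ws(3) yz unfolding branch_nested_def by fastforce
  ultimately show ?case using ws by (intro exI[of _ "y # ws"]) auto
qed simp

lemma branch_nested_same_colour:
  assumes "finite C" "\<forall>i\<le>m. col i \<in> C" "card C < L" "4 ^ L \<le> branches_in_scope B 0"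
  shows "\<exists>b t. b \<le> m \<and> t < scope_end t \<and> branch_nested B b t \<and> col b = col t"
proof -
  obtain ws where ws: "length ws = L" "sorted_wrt (branch_nested B) ws"
      "\<forall>w\<in>set ws. w < scope_end w \<and> w \<le> m"
    using branch_nested_chain[of 0 L B] assms(4) by auto
  have "card (set (map col ws)) \<le> card C"
    using ws(3) assms(2) by (intro card_mono[OF assms(1)]) auto
  then have "\<not> distinct (map col ws)"
    using distinct_card[of "map col ws"] ws(1) assms(3) by auto
  then obtain a b where ab: "a < b" "b < length ws" "col (ws ! a) = col (ws ! b)"
    unfolding distinct_conv_nth by (metis length_map linorder_neqE_nat nth_map order.strict_trans)
  then show ?thesis
    using sorted_wrt_nth_less[OF ws(2) ab(1,2)] ws(3) nth_mem[of a ws] nth_mem[of b ws]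
    by (metis order.strict_trans)
qed

end

lemma sub_append: "sub t (a @ b) = (case sub t a of None \<Rightarrow> None | Some u \<Rightarrow> sub u b)"
  by (induction t a rule: sub.induct) auto

lemma sub_snoc_Node:
  "sub D v = Some (Node A x cs) \<Longrightarrow> sub D (v @ [c]) = Some u \<Longrightarrow> c < length cs \<and> cs ! c = u"
  by (simp add: sub_append split: if_splits)

lemma valid_tree_sub: "valid_tree G t \<Longrightarrow> sub t a = Some u \<Longrightarrow> valid_tree G u"
  by (induction t a arbitrary: u rule: sub.induct) (auto split: if_splits)

lemma is_internal_take:
  assumes "is_internal D ps"
  shows "is_internal D (take i ps)"
proof -
  obtain A x cs where "sub D (take i ps @ drop i ps) = Some (Node A x cs)"
    using assms unfolding is_internal_def by auto
  then obtain u where "sub D (take i ps) = Some u" "sub u (drop i ps) = Some (Node A x cs)"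
    unfolding sub_append by (auto split: option.splits)
  then show ?thesis unfolding is_internal_def by (cases u; cases "drop i ps") auto
qed

lemma labels_Inl_Node:
  assumes "map lab cs = map (\<lambda>C. Inl (C, y)) bs" "c \<in> set cs"
  shows "\<exists>B ds. c = Node B y ds"
proof -
  have "lab c \<in> (\<lambda>C. Inl (C, y)) ` set bs" using assms by (metis image_eqI list.set_map)
  then show ?thesis by (cases c) auto
qed

lemma applies_children:
  assumes "applies p A x cs"
  obtains y where "length y \<le> Suc (length x)" "\<forall>c\<in>set cs. \<exists>B ds. c = Node B y ds"
  | "\<forall>c\<in>set cs. \<exists>w. c = Leaf w"
proof (cases p)
  case (PRule B r)
  then obtain bs where "map lab cs = map (\<lambda>C. Inl (C, x)) bs" using assms by auto
  then show ?thesis by (intro that(1)[of x]) (use labels_Inl_Node in auto)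
next
  case (PPush B C f)
  then have "map lab cs = map (\<lambda>C. Inl (C, f # x)) [C]" using assms by auto
  then show ?thesis using that(1)[of "f # x"] labels_Inl_Node by fastforce
next
  case (PPop B f r)
  then consider y bs where "x = f # y" "map lab cs = map (\<lambda>C. Inl (C, y)) bs"
    | w where "map lab cs = [Inr w]"
    using assms by auto
  then show ?thesis
  proof cases
    case 1
    then show ?thesis using that(1)[of y] labels_Inl_Node by fastforce
  next
    case 2
    have "\<exists>w. c = Leaf w" if "c \<in> set cs" for c
      using 2 that by (cases c) (auto simp: map_eq_Cons_conv)
    then show ?thesis using that(2) by blast
  qed
qed

lemma valid_tree_nt:
  assumes "igrammar G" "valid_tree G D" "sub D v = Some (Node A x cs)"
  shows "A \<in> nts G"
proof -
  obtain p where p: "p \<in> prods G" "applies p A x cs"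
    using valid_tree_sub[OF assms(2,3)] by auto
  have "prod_ok G p" using p(1) assms(1) unfolding igrammar_def by auto
  then show ?thesis using p(2) by (cases p) auto
qed

lemma valid_tree_siblings:
  assumes "valid_tree G D" "sub D v = Some (Node A x cs)"
    and "sub D (v @ [c]) = Some (Node B y ds)" "sub D (v @ [c']) = Some u"
  shows "length y \<le> Suc (length x) \<and> (\<exists>B' ds'. u = Node B' y ds')"
proof -
  obtain p where "applies p A x cs" using valid_tree_sub[OF assms(1,2)] by auto
  moreover have mem: "Node B y ds \<in> set cs" "u \<in> set cs"
    using sub_snoc_Node[OF assms(2,3)] sub_snoc_Node[OF assms(2,4)] by (metis nth_mem)+
  ultimately show ?thesis
  proof (cases rule: applies_children)
    case (1 y')
    then have "y' = y" using mem(1) by auto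
    then show ?thesis using 1 mem(2) by auto
  next
    case 2
    then show ?thesis using mem(1) by auto
  qed
qed

lemma take_append_take_drop:
  assumes "i \<le> j"
  shows "take i xs @ take k (drop i (take j xs)) = take (min j (i + k)) xs"
proof -
  let ?T = "take (min j (i + k)) xs"
  have "take k (drop i (take j xs)) = drop i ?T" by (simp add: take_drop min.commute add.commute)
  moreover have "take i xs = take i ?T" using assms by simp
  ultimately show ?thesis by (metis append_take_drop_id)
qed

definition three_partitions :: "'a set \<Rightarrow> ('a set \<times> 'a set \<times> 'a set) set" where
  "three_partitions N = {(X, Y, Z). X \<union> Y \<union> Z = N \<and> X \<inter> Y = {} \<and> X \<inter> Z = {} \<and> Y \<inter> Z = {}}"

lemma finite_three_partitions: "finite N \<Longrightarrow> finite (three_partitions N)"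
  by (rule finite_subset[of _ "Pow N \<times> Pow N \<times> Pow N"]) (auto simp: three_partitions_def)

lemma card_three_partitions:
  assumes "finite N"
  shows "card (three_partitions N) \<le> 3 ^ card N"
proof -
  define part_index where "part_index = (\<lambda>(X, Y, Z::'a set).
     restrict (\<lambda>a. if a \<in> X then 0 else if a \<in> Y then 1 else (2::nat)) N)"
  have recover: "X = {a \<in> N. part_index (X, Y, Z) a = 0} \<and> Y = {a \<in> N. part_index (X, Y, Z) a = 1}
      \<and> Z = {a \<in> N. part_index (X, Y, Z) a = 2}" if "(X, Y, Z) \<in> three_partitions N" for X Y Z
    using that unfolding three_partitions_def part_index_def
    by (auto simp: disjoint_iff split: if_splits)
  have "inj_on part_index (three_partitions N)"
    by (rule inj_onI) (metis prod_cases3 recover)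
  moreover have "part_index ` three_partitions N \<subseteq> N \<rightarrow>\<^sub>E {0, 1, 2}"
    unfolding part_index_def by (auto simp: PiE_iff split: if_splits)
  ultimately have "card (three_partitions N) \<le> card (N \<rightarrow>\<^sub>E {0, 1, 2::nat})"
    using assms by (intro card_inj_on_le) (auto simp: finite_PiE)
  also have "\<dots> = 3 ^ card N" using assms by (simp add: card_PiE numeral_3_eq_3)
  finally show ?thesis .
qed

lemma card_colours_less:
  assumes "finite N"
  shows "card (N \<times> N \<times> three_partitions N) < card N ^ 2 * 3 ^ card N + 1"
proof -
  have "card (N \<times> N \<times> three_partitions N) \<le> card N * (card N * 3 ^ card N)"
    using card_three_partitions[OF assms] by (simp add: card_cartesian_product)
  then show ?thesis by (simp add: power2_eq_square)
qed

lemma tau_in_three_partitions: "tau G D M v \<in> three_partitions (nts G)"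
  unfolding tau_def three_partitions_def by auto

lemma grounded_two_nts:
  assumes "igrammar G" "grounded G" "p \<in> prods G"
  shows "2 \<le> card (nts G)"
proof -
  obtain A where "A \<in> nts G - {start G}"
    using assms(2,3) unfolding grounded_def grounded_with_def by blast
  then have "{start G, A} \<subseteq> nts G" "card {start G, A} = 2"
    using assms(1) unfolding igrammar_def by auto
  then show ?thesis using assms(1) unfolding igrammar_def by (metis card_mono)
qed

locale tree_path =
  fixes G :: "('n, 't, 'f) igrammar" and D :: "('n, 't, 'f) dtree" and ps :: "nat list"
  assumes valid: "valid_tree G D"
    and internal: "is_internal D ps"
    and ends_at_leaf: "\<exists>j w. sub D (ps @ [j]) = Some (Leaf w)"
begin

lemma path_node:
  obtains A x cs where "sub D (take i ps) = Some (Node A x cs)"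
  using is_internal_take[OF internal] unfolding is_internal_def by blast

lemma path_child_eta:
  assumes "k < length ps" "is_internal D (take k ps @ [c])"
  shows "eta D (take k ps @ [c]) = eta D (take (Suc k) ps)"
    and "eta D (take (Suc k) ps) \<le> Suc (eta D (take k ps))"
proof -
  obtain A x cs where a: "sub D (take k ps) = Some (Node A x cs)" by (rule path_node)
  obtain B y ds where b: "sub D (take k ps @ [c]) = Some (Node B y ds)"
    using assms(2) unfolding is_internal_def by blast
  have take_Suc: "take (Suc k) ps = take k ps @ [ps ! k]"
    using assms(1) by (simp add: take_Suc_conv_app_nth)
  obtain u where u: "sub D (take k ps @ [ps ! k]) = Some u"
    using path_node unfolding take_Suc[symmetric] by metis
  show "eta D (take k ps @ [c]) = eta D (take (Suc k) ps)"
    "eta D (take (Suc k) ps) \<le> Suc (eta D (take k ps))"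
    using valid_tree_siblings[OF valid a b u] a b u unfolding eta_def take_Suc by auto
qed

lemma eta_take_Suc_le:
  assumes "k < length ps"
  shows "eta D (take (Suc k) ps) \<le> Suc (eta D (take k ps))"
proof -
  have "is_internal D (take k ps @ [ps ! k])"
    using is_internal_take[OF internal, of "Suc k"] assms by (simp add: take_Suc_conv_app_nth)
  then show ?thesis using path_child_eta(2) assms by blast
qed

lemma last_node_has_no_internal_child: "\<not> is_internal D (ps @ [c])"
proof
  assume "is_internal D (ps @ [c])"
  then obtain B y ds where b: "sub D (ps @ [c]) = Some (Node B y ds)"
    unfolding is_internal_def by blast
  obtain A x cs where a: "sub D ps = Some (Node A x cs)" using path_node[of "length ps"] by auto
  obtain j w where "sub D (ps @ [j]) = Some (Leaf w)" using ends_at_leaf by blast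
  from valid_tree_siblings[OF valid a b this] show False by auto
qed

sublocale height_profile "\<lambda>i. eta D (take i ps)" "length ps"
  by unfold_locales (rule eta_take_Suc_le)

lemma take_in_scope:
  assumes "i \<le> k" "\<And>j. i \<le> j \<Longrightarrow> j \<le> k \<Longrightarrow> eta D (take i ps) \<le> eta D (take j ps)"
  shows "take k ps \<in> scope D (take i ps)"
  unfolding scope_def
proof (intro CollectI exI conjI allI impI)
  let ?q = "drop i (take k ps)"
  show "take k ps = take i ps @ ?q"
    using assms(1) by (metis append_take_drop_id min.absorb1 take_take)
  then show "is_internal D (take i ps @ ?q)" using is_internal_take[OF internal] by metis
  fix k' assume "k' \<le> length ?q"
  show "eta D (take i ps) \<le> eta D (take i ps @ take k' ?q)"
    unfolding take_append_take_drop[OF assms(1)] using assms by simp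
qed

lemma scope_end_in_beta:
  assumes "i \<le> length ps"
  shows "take (scope_end i) ps \<in> beta D (take i ps)"
proof -
  define k where "k = scope_end i"
  have ik: "i \<le> k" "k \<le> length ps"
    using scope_end_ge[OF assms] scope_end_le[OF assms] unfolding k_def by auto
  have "take k ps \<in> scope D (take i ps)"
    using ik(1) by (rule take_in_scope) (use height_ge_in_scope in \<open>simp add: k_def\<close>)
  moreover have "take k ps @ [c] \<notin> scope D (take i ps)" for c
  proof
    assume "take k ps @ [c] \<in> scope D (take i ps)"
    then obtain q where q: "take k ps @ [c] = take i ps @ q" "is_internal D (take i ps @ q)"
        "\<forall>k'\<le>length q. eta D (take i ps) \<le> eta D (take i ps @ take k' q)"
      unfolding scope_def by blast
    then have internal_child: "is_internal D (take k ps @ [c])"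
      and ge: "eta D (take i ps) \<le> eta D (take k ps @ [c])" by auto
    have "k \<noteq> length ps" using internal_child last_node_has_no_internal_child by auto
    then have "k < length ps" "eta D (take (Suc k) ps) < eta D (take i ps)"
      using ik scope_end_exit[OF assms] unfolding k_def by auto
    then show False using path_child_eta(1)[OF _ internal_child] ge by simp
  qed
  ultimately show ?thesis unfolding beta_def k_def by blast
qed

lemma sigma_path_in_nts: "igrammar G \<Longrightarrow> sigma D (take i ps) \<in> nts G"
  using valid_tree_nt[OF _ valid] path_node unfolding sigma_def by (metis nt_of.simps option.sel)

end

theorem lemma1:
  fixes G :: "('n, 't, 'f) igrammar" and D :: "('n, 't, 'f) dtree"
    and s :: "'t list" and M :: "nat set" and ps :: "nat list"
  assumes "igrammar G" and "grounded G"
    and "deriv_tree G D s"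
    and "M \<subseteq> {..<length s}"
    and "is_internal D ps" and "\<exists>j w. sub D (ps @ [j]) = Some (Leaf w)"
    and "card {i. i \<le> length ps \<and> branch D M (take i ps)}
           > (card (nts G) * 3 ^ card (nts G)) ^ (card (nts G) ^ 2 * 3 ^ card (nts G) + 1)"
  shows "\<exists>b1 t1 t2 b2. b1 < t1 \<and> t1 < t2 \<and> t2 \<le> b2 \<and> b2 \<le> length ps
     \<and> sigma D (take b1 ps) = sigma D (take t1 ps)
     \<and> sigma D (take t2 ps) = sigma D (take b2 ps)
     \<and> take b2 ps \<in> beta D (take b1 ps)
     \<and> take t2 ps \<in> beta D (take t1 ps)
     \<and> tau G D M (take b1 ps) = tau G D M (take t1 ps)
     \<and> (\<exists>i. ((b1 \<le> i \<and> i < t1) \<or> (t2 \<le> i \<and> i < b2)) \<and> branch D M (take i ps))"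
proof -
  define n where "n = card (nts G)"
  define L where "L = n ^ 2 * 3 ^ n + 1"
  define Br where "Br = {i. i \<le> length ps \<and> branch D M (take i ps)}"
  obtain cs where D: "D = Node (start G) [] cs" and valid: "valid_tree G D"
    using assms(3) unfolding deriv_tree_def by auto
  interpret tree_path G D ps using valid assms(5,6) by unfold_locales
  define C where "C = nts G \<times> nts G \<times> three_partitions (nts G)"
  define col where
    "col i = (sigma D (take i ps), sigma D (take (scope_end i) ps), tau G D M (take i ps))" for i
  have finite_nts: "finite (nts G)" using assms(1) unfolding igrammar_def by simp
  then have "finite C" unfolding C_def by (simp add: finite_three_partitions)
  have "card C < L" unfolding C_def L_def n_def by (rule card_colours_less[OF finite_nts])
  have "\<forall>i\<le>length ps. col i \<in> C"
    unfolding col_def C_def by (simp add: sigma_path_in_nts[OF assms(1)] tau_in_three_partitions)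
  have "2 \<le> n"
    using valid grounded_two_nts[OF assms(1,2)] unfolding n_def D by auto
  then have "4 \<le> n * 3 ^ n" using mult_le_mono[of 2 n 3 "3 ^ n"] by (simp add: self_le_power)
  then have "4 ^ L \<le> (n * 3 ^ n) ^ L" by (rule power_mono) simp
  also have "\<dots> < card Br" using assms(7) unfolding Br_def L_def n_def .
  also have "\<dots> \<le> Suc (branches_in_scope Br 0)"
    using scope_end_eq_last[of 0]
    by (intro card_le_Suc_branches_in_scope) (simp_all add: eta_def D Br_def subset_iff)
  finally have "4 ^ L \<le> branches_in_scope Br 0" by simp
  then obtain b t where "b \<le> length ps" "t < scope_end t" "branch_nested Br b t" "col b = col t"
    using branch_nested_same_colour[OF \<open>finite C\<close> \<open>\<forall>i\<le>length ps. col i \<in> C\<close> \<open>card C < L\<close>]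
    by blast
  moreover have "take (scope_end i) ps \<in> beta D (take i ps)" if "i \<le> scope_end b" for i
    using scope_end_in_beta scope_end_le[OF \<open>b \<le> length ps\<close>] that by simp
  ultimately show ?thesis
    using scope_end_le[OF \<open>b \<le> length ps\<close>] unfolding branch_nested_def col_def Br_def
    by (intro exI[of _ b] exI[of _ t] exI[of _ "scope_end t"] exI[of _ "scope_end b"]) auto
qed

end
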